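(* Let $(X,d)$ be an infinite metric space. For every snowflaking function $h$ and every $n\in\mathbb N$ there exists $\delta>0$ such that $(X,h\circ d)$ does not admit a $(1+\delta)$-bi-Lipschitz embedding into any normed linear space of dimension $n$.
   Context: Let $\mathbb R_{\geq}=[0,\infty)$. A function $h:\mathbb R_{\geq}\to\mathbb R_{\geq}$ is called a snowflaking function if: (S1) $h(0)=0$; (S2) $h$ is concave; (S3) $h(t)/t\to\infty$ as $t\to0^+$; (S4) $h(t)/t\to 0$ as $t\to\infty$. For such $h$ and a metric $d$ on $X$, $h\circ d$ is again a metric on $X$. A map $f$ between metric spaces is $L$-bi-Lipschitz if $L^{-1}d(x,y)\le d(f(x),f(y))\le L\,d(x,y)$ for all $x,y$. *)

theory Defs
  imports "HOL-Analysis.Analysis"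
begin

definition snowflaking :: "(real \<Rightarrow> real) \<Rightarrow> bool" where
  "snowflaking h \<longleftrightarrow>
     (\<forall>t\<ge>0. h t \<ge> 0) \<and>
     h 0 = 0 \<and>
     concave_on {0..} h \<and>
     filterlim (\<lambda>t. h t / t) at_top (at_right 0) \<and>
     ((\<lambda>t. h t / t) \<longlongrightarrow> 0) at_top"

text \<open>A norm on the real vector space R^n (represented as real ^ 'n).
  Every n-dimensional real normed linear space is isometrically isomorphic
  to (R^n, N) for such a norm N.\<close>
definition is_norm :: "('v::real_vector \<Rightarrow> real) \<Rightarrow> bool" where
  "is_norm N \<longleftrightarrow>
     (\<forall>x. 0 \<le> N x) \<and> (\<forall>x. N x = 0 \<longleftrightarrow> x = 0) \<and>
     (\<forall>c x. N (c *\<^sub>R x) = \<bar>c\<bar> * N x) \<and>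
     (\<forall>x y. N (x + y) \<le> N x + N y)"

definition bi_lipschitz_on ::
  "'a set \<Rightarrow> ('a \<Rightarrow> 'a \<Rightarrow> real) \<Rightarrow> ('b \<Rightarrow> 'b \<Rightarrow> real) \<Rightarrow> real \<Rightarrow> ('a \<Rightarrow> 'b) \<Rightarrow> bool" where
  "bi_lipschitz_on X d e L f \<longleftrightarrow>
     (\<forall>x\<in>X. \<forall>y\<in>X. d x y / L \<le> e (f x) (f y) \<and> e (f x) (f y) \<le> L * d x y)"

end

theory Submission
  imports Defs "HOL-Real_Asymp.Real_Asymp"
begin

text \<open>Every infinite metric space contains one of two kinds of configurations. Either, for some
  \<epsilon> and R, there are arbitrarily large \<epsilon>-separated sets of diameter at most R; a bi-Lipschitz
  image of such a set in an n-dimensional normed space is again uniformly separated and bounded, which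
  volume packing forbids. Or, for every K, there are a centre b and K points whose distances from b
  are pairwise lacunary: far apart on the scale of h, in the sense that h(t)/t drops by a factor 4
  between them. Such stars exist in unbounded spaces (go far out) and in totally bounded ones (take
  a late point of an injective Cauchy sequence as centre).

  For a star with 9^n + 1 points, two images leave the image of the centre in directions that are
  1/4-close in norm. Concavity of h makes the snowflaked distance between these two points nearly the
  longer of their distances from b, whereas in the normed space it is shorter by about the shorter one;
  a (1+\<delta>)-distortion cannot bridge this once \<delta> is small compared with the ratios of the
  h-distances in the star.\<close>

section \<open>Norms on finite-dimensional spaces\<close>

lemma is_normD:
  assumes "is_norm N"
  shows "0 \<le> N x" "N x = 0 \<longleftrightarrow> x = 0" "N (c *\<^sub>R x) = \<bar>c\<bar> * N x" "N (x + y) \<le> N x + N y"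
  using assms unfolding is_norm_def by auto

lemma is_norm_minus_commute: "is_norm N \<Longrightarrow> N (x - y) = N (y - x)"
  using is_normD(3)[of N "-1" "x - y"] by simp

lemma is_norm_triangle_diff: "is_norm N \<Longrightarrow> N (x - z) \<le> N (x - y) + N (y - z)"
  using is_normD(4)[of N "x - y" "y - z"] by simp

lemma is_norm_convex: "is_norm N \<Longrightarrow> convex_on UNIV N"
proof (rule convex_onI)
  fix t x y assume N: "is_norm N" and t: "(0::real) < t" "t < 1"
  have "N ((1 - t) *\<^sub>R x + t *\<^sub>R y) \<le> N ((1 - t) *\<^sub>R x) + N (t *\<^sub>R y)"
    using is_normD(4)[OF N] .
  also have "\<dots> = (1 - t) * N x + t * N y"
    using is_normD(3)[OF N] t by simp
  finally show "N ((1 - t) *\<^sub>R x + t *\<^sub>R y) \<le> (1 - t) * N x + t * N y" .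
qed simp

lemma is_norm_continuous:
  fixes N :: "'v::euclidean_space \<Rightarrow> real"
  shows "is_norm N \<Longrightarrow> continuous_on UNIV N"
  by (rule convex_on_continuous) (auto simp: is_norm_convex)

text \<open>The minimum of N on the compact Euclidean unit sphere is positive.\<close>
lemma is_norm_ge_norm:
  fixes N :: "'v::euclidean_space \<Rightarrow> real"
  assumes N: "is_norm N"
  obtains c where "c > 0" "\<And>x. c * norm x \<le> N x"
proof -
  have "sphere (0::'v) 1 \<noteq> {}"
    by simp
  then obtain z where z: "z \<in> sphere 0 1" and min: "\<And>y. y \<in> sphere 0 1 \<Longrightarrow> N z \<le> N y"
    using continuous_attains_inf[OF compact_sphere _ continuous_on_subset[OF is_norm_continuous[OF N]]]
    by blast
  have "N z > 0"
    using z is_normD(1,2)[OF N, of z] by fastforce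
  moreover have "N z * norm x \<le> N x" for x
  proof (cases "x = 0")
    case False
    then have "N z \<le> N ((1 / norm x) *\<^sub>R x)"
      by (intro min) simp
    also have "\<dots> = N x / norm x"
      using is_normD(3)[OF N] by simp
    finally show ?thesis
      using False by (simp add: field_simps)
  qed (use is_normD(1)[OF N] in simp)
  ultimately show thesis
    using that by blast
qed

definition norm_ball :: "('v::real_vector \<Rightarrow> real) \<Rightarrow> 'v \<Rightarrow> real \<Rightarrow> 'v set" where
  "norm_ball N c r = {x. N (x - c) < r}"

lemma open_norm_ball:
  fixes N :: "'v::euclidean_space \<Rightarrow> real"
  assumes N: "is_norm N"
  shows "open (norm_ball N c r)"
proof -
  have "continuous_on UNIV (\<lambda>x. N (x - c))"
    by (rule continuous_on_compose2[OF is_norm_continuous[OF N]]) (auto intro!: continuous_intros)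
  then show ?thesis
    unfolding norm_ball_def by (intro open_Collect_less) auto
qed

lemma bounded_norm_ball:
  fixes N :: "'v::euclidean_space \<Rightarrow> real"
  assumes N: "is_norm N"
  shows "bounded (norm_ball N c r)"
proof -
  obtain k where k: "k > 0" "\<And>x. k * norm x \<le> N x"
    using is_norm_ge_norm[OF N] by blast
  have "norm_ball N c r \<subseteq> cball c (r / k)"
  proof
    fix x assume "x \<in> norm_ball N c r"
    then have "k * norm (x - c) < r"
      using k(2)[of "x - c"] unfolding norm_ball_def by simp
    then show "x \<in> cball c (r / k)"
      using k(1) by (simp add: dist_norm norm_minus_commute field_simps)
  qed
  then show ?thesis
    using bounded_cball bounded_subset by blast
qed

lemma norm_ball_lmeasurable:
  fixes N :: "'v::euclidean_space \<Rightarrow> real"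
  shows "is_norm N \<Longrightarrow> norm_ball N c r \<in> lmeasurable"
  by (intro lmeasurable_open bounded_norm_ball open_norm_ball)

lemma measure_norm_ball:
  fixes N :: "'v::euclidean_space \<Rightarrow> real"
  assumes N: "is_norm N" and r: "r > 0"
  shows "measure lebesgue (norm_ball N c r) = r ^ DIM('v) * measure lebesgue (norm_ball N 0 1)"
proof -
  have "norm_ball N c r = (\<lambda>x. r *\<^sub>R x + c) ` norm_ball N 0 1"
  proof (intro equalityI subsetI)
    fix x assume x: "x \<in> norm_ball N c r"
    have "N ((1 / r) *\<^sub>R (x - c)) = N (x - c) / r"
      using is_normD(3)[OF N] r by simp
    then have "(1 / r) *\<^sub>R (x - c) \<in> norm_ball N 0 1"
      using x r unfolding norm_ball_def by simp
    moreover have "x = r *\<^sub>R ((1 / r) *\<^sub>R (x - c)) + c"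
      using r by simp
    ultimately show "x \<in> (\<lambda>x. r *\<^sub>R x + c) ` norm_ball N 0 1"
      by blast
  qed (use is_normD(3)[OF N] r in \<open>auto simp: norm_ball_def\<close>)
  then show ?thesis
    using measure_lebesgue_affine[of r c "norm_ball N 0 1"] r by simp
qed

lemma measure_norm_ball_pos:
  fixes N :: "'v::euclidean_space \<Rightarrow> real"
  assumes N: "is_norm N"
  shows "measure lebesgue (norm_ball N 0 1) > 0"
proof -
  have "0 \<in> norm_ball N 0 1"
    using is_normD(2)[OF N, of 0] unfolding norm_ball_def by simp
  then obtain e where e: "e > 0" "ball 0 e \<subseteq> norm_ball N 0 1"
    using open_norm_ball[OF N] open_contains_ball by blast
  have "0 < measure lebesgue (ball (0::'v) e)"
    using content_ball_pos[OF e(1)] by simp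
  also have "\<dots> \<le> measure lebesgue (norm_ball N 0 1)"
    by (intro measure_mono_fmeasurable[OF e(2)] norm_ball_lmeasurable[OF N]) auto
  finally show ?thesis .
qed

text \<open>Volume packing: the balls of radius a/2 around the points are disjoint and lie in a ball
  of radius R + a/2.\<close>
lemma card_le_if_norm_separated:
  fixes N :: "'v::euclidean_space \<Rightarrow> real" and p :: "'i \<Rightarrow> 'v"
  assumes N: "is_norm N" and I: "finite I" and a: "0 < a" and R: "0 \<le> R"
    and near: "\<And>i. i \<in> I \<Longrightarrow> N (p i - c) \<le> R"
    and sep: "\<And>i j. i \<in> I \<Longrightarrow> j \<in> I \<Longrightarrow> i \<noteq> j \<Longrightarrow> a \<le> N (p i - p j)"
  shows "real (card I) \<le> (2 * R / a + 1) ^ DIM('v)"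
proof -
  define B where "B i = norm_ball N (p i) (a / 2)" for i
  define \<mu> where "\<mu> = measure lebesgue (norm_ball N (0::'v) 1)"
  have disj: "pairwise (\<lambda>i j. disjnt (B i) (B j)) I"
    unfolding pairwise_def disjnt_iff
  proof (intro ballI impI allI notI, elim conjE)
    fix i j x assume ij: "i \<in> I" "j \<in> I" "i \<noteq> j" and x: "x \<in> B i" "x \<in> B j"
    have "N (p i - p j) \<le> N (p i - x) + N (x - p j)"
      by (rule is_norm_triangle_diff[OF N])
    moreover have "N (p i - x) = N (x - p i)"
      by (rule is_norm_minus_commute[OF N])
    ultimately show False
      using sep[OF ij] x unfolding B_def norm_ball_def by simp
  qed
  have sub: "(\<Union>i\<in>I. B i) \<subseteq> norm_ball N c (R + a / 2)"
  proof clarify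
    fix i x assume i: "i \<in> I" and "x \<in> B i"
    then have "N (x - p i) < a / 2"
      unfolding B_def norm_ball_def by simp
    moreover have "N (x - c) \<le> N (x - p i) + N (p i - c)"
      by (rule is_norm_triangle_diff[OF N])
    ultimately show "x \<in> norm_ball N c (R + a / 2)"
      using near[OF i] unfolding norm_ball_def by simp
  qed
  have "real (card I) * ((a / 2) ^ DIM('v) * \<mu>) = (\<Sum>i\<in>I. measure lebesgue (B i))"
    using measure_norm_ball[OF N, of "a / 2"] a by (simp add: B_def \<mu>_def)
  also have "\<dots> = measure lebesgue (\<Union>i\<in>I. B i)"
    by (rule measure_UNION'[OF I _ disj, symmetric]) (simp add: B_def norm_ball_lmeasurable[OF N])
  also have "\<dots> \<le> measure lebesgue (norm_ball N c (R + a / 2))"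
    using sub I by (intro measure_mono_fmeasurable)
      (auto intro!: sets.finite_UN fmeasurableD norm_ball_lmeasurable[OF N] simp: B_def)
  also have "\<dots> = (R + a / 2) ^ DIM('v) * \<mu>"
    using measure_norm_ball[OF N, of "R + a / 2"] R a by (simp add: \<mu>_def)
  also have "\<dots> = (2 * R / a + 1) ^ DIM('v) * (a / 2) ^ DIM('v) * \<mu>"
  proof -
    have "R + a / 2 = (2 * R / a + 1) * (a / 2)"
      using a by (simp add: field_simps)
    then show ?thesis
      by (metis power_mult_distrib)
  qed
  finally have "real (card I) * (a / 2) ^ DIM('v) * \<mu> \<le> (2 * R / a + 1) ^ DIM('v) * (a / 2) ^ DIM('v) * \<mu>"
    by (simp only: mult.assoc)
  then have "real (card I) * (a / 2) ^ DIM('v) \<le> (2 * R / a + 1) ^ DIM('v) * (a / 2) ^ DIM('v)"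
    using measure_norm_ball_pos[OF N] unfolding \<mu>_def by (rule mult_right_le_imp_le)
  then show ?thesis
    by (rule mult_right_le_imp_le) (use a in simp)
qed

section \<open>Snowflaking functions\<close>

context
  fixes h :: "real \<Rightarrow> real"
  assumes sf: "snowflaking h"
begin

lemma snowflaking_nonneg: "0 \<le> t \<Longrightarrow> 0 \<le> h t"
  and snowflaking_zero: "h 0 = 0"
  and snowflaking_concave: "concave_on {0..} h"
  and snowflaking_slope_at_0: "filterlim (\<lambda>t. h t / t) at_top (at_right 0)"
  and snowflaking_slope_at_top: "((\<lambda>t. h t / t) \<longlongrightarrow> 0) at_top"
  using sf unfolding snowflaking_def by blast+

lemma snowflaking_chord:
  assumes "0 < s" "s \<le> t"
  shows "s / t * h t \<le> h s"
proof -
  have "(1 - s / t) * h 0 + s / t * h t \<le> h ((1 - s / t) *\<^sub>R 0 + (s / t) *\<^sub>R t)"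
    using assms by (intro concave_onD[OF snowflaking_concave]) auto
  then show ?thesis
    using assms by (simp add: snowflaking_zero)
qed

lemma snowflaking_slope_antimono:
  assumes "0 < s" "s \<le> t"
  shows "h t / t \<le> h s / s"
  using snowflaking_chord[OF assms] assms by (simp add: field_simps)

text \<open>Concavity and h \<ge> 0 give (T - t)/(T - s) * h s \<le> h t for all T > t; let T tend to infinity.\<close>
lemma snowflaking_mono:
  assumes "0 \<le> s" "s \<le> t"
  shows "h s \<le> h t"
proof (cases "s = t")
  case False
  with assms have st: "s < t" by simp
  have "\<forall>\<^sub>F T in at_top. (T - t) / (T - s) * h s \<le> h t"
    using eventually_gt_at_top[of t]
  proof eventually_elim
    case (elim T)
    define w where "w = (T - t) / (T - s)"
    have w: "0 \<le> w" "w \<le> 1"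
      using elim st unfolding w_def by (auto simp: field_simps)
    have "w * (T - s) = T - t"
      using elim st unfolding w_def by simp
    then have "(1 - w) *\<^sub>R T + w *\<^sub>R s = t"
      by (simp add: algebra_simps)
    moreover have "(1 - w) * h T + w * h s \<le> h ((1 - w) *\<^sub>R T + w *\<^sub>R s)"
      using w assms elim by (intro concave_onD[OF snowflaking_concave]) auto
    ultimately have "(1 - w) * h T + w * h s \<le> h t"
      by simp
    moreover have "0 \<le> (1 - w) * h T"
      using w snowflaking_nonneg[of T] assms elim by simp
    ultimately show ?case
      unfolding w_def by linarith
  qed
  moreover have "((\<lambda>T. (T - t) / (T - s) * h s) \<longlongrightarrow> h s) at_top"
    by real_asymp
  ultimately show ?thesis
    by (intro tendsto_le[OF trivial_limit_at_top_linorder tendsto_const]) auto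
qed simp

lemma snowflaking_slope_large_near_0:
  obtains \<tau> where "\<tau> > 0" "\<And>t. 0 < t \<Longrightarrow> t \<le> \<tau> \<Longrightarrow> K \<le> h t / t"
proof -
  have "\<forall>\<^sub>F t in at_right 0. K \<le> h t / t"
    using snowflaking_slope_at_0 unfolding filterlim_at_top by blast
  then obtain b where "b > 0" "\<And>t. 0 < t \<Longrightarrow> t < b \<Longrightarrow> K \<le> h t / t"
    unfolding eventually_at_right_field by auto
  then show thesis
    using that[of "b / 2"] by auto
qed

lemma snowflaking_slope_small_at_top:
  assumes "\<epsilon> > 0"
  obtains T where "\<And>t. T \<le> t \<Longrightarrow> h t / t \<le> \<epsilon>"
proof -
  have "\<forall>\<^sub>F t in at_top. dist (h t / t) 0 < \<epsilon>"
    using tendstoD[OF snowflaking_slope_at_top assms] .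
  then have "\<forall>\<^sub>F t in at_top. h t / t \<le> \<epsilon>"
    by eventually_elim (metis abs_less_iff dist_real_def diff_zero less_eq_real_def)
  then show thesis
    using that unfolding eventually_at_top_linorder by auto
qed

lemma snowflaking_pos:
  assumes "t > 0"
  shows "h t > 0"
proof -
  obtain \<tau> where \<tau>: "\<tau> > 0" "\<And>y. 0 < y \<Longrightarrow> y \<le> \<tau> \<Longrightarrow> 1 \<le> h y / y"
    using snowflaking_slope_large_near_0 by blast
  define y where "y = min t \<tau>"
  have y: "0 < y" "y \<le> \<tau>" "y \<le> t"
    using assms \<tau> unfolding y_def by auto
  then have "y \<le> h y"
    using \<tau>(2)[of y] by (simp add: field_simps)
  also have "\<dots> \<le> h t"
    using snowflaking_mono y by auto
  finally show ?thesis
    using y by linarith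
qed

end

section \<open>Rigidity of lacunary stars\<close>

definition direction :: "('v::real_vector \<Rightarrow> real) \<Rightarrow> 'v \<Rightarrow> 'v" where
  "direction N z = (1 / N z) *\<^sub>R z"

lemma is_norm_direction: "is_norm N \<Longrightarrow> N z > 0 \<Longrightarrow> N (direction N z) = 1"
  using is_normD(3)[of N "1 / N z" z] by (simp add: direction_def)

text \<open>Write z - w = (N z - N w) \<cdot> direction z + N w \<cdot> (direction z - direction w).\<close>
lemma is_norm_diff_le_if_directions_close:
  assumes N: "is_norm N" and z: "N z > 0" and w: "N w > 0"
    and close: "N (direction N z - direction N w) \<le> \<epsilon>"
  shows "N (z - w) \<le> \<bar>N z - N w\<bar> + \<epsilon> * N w"
proof -
  have "z - w = (N z - N w) *\<^sub>R direction N z + N w *\<^sub>R (direction N z - direction N w)"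
    using z w by (simp add: direction_def algebra_simps)
  then have "N (z - w) \<le> N ((N z - N w) *\<^sub>R direction N z) + N (N w *\<^sub>R (direction N z - direction N w))"
    using is_normD(4)[OF N] by simp
  also have "\<dots> = \<bar>N z - N w\<bar> + N w * N (direction N z - direction N w)"
    using is_normD(3)[OF N] is_norm_direction[OF N z] w by simp
  also have "\<dots> \<le> \<bar>N z - N w\<bar> + N w * \<epsilon>"
    using close w by (intro add_left_mono mult_left_mono) auto
  finally show ?thesis
    by (simp add: mult.commute)
qed

definition lacunary :: "(real \<Rightarrow> real) \<Rightarrow> real \<Rightarrow> real \<Rightarrow> bool" where
  "lacunary h s t \<longleftrightarrow> 0 < s \<and> 2 * s \<le> t \<and> h (t / 2) / (t / 2) \<le> h s / s / 4"

context
  fixes h :: "real \<Rightarrow> real"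
  assumes sf: "snowflaking h"
begin

lemma lacunary_trans:
  assumes rs: "lacunary h r s" and st: "lacunary h s t"
  shows "lacunary h r t"
proof -
  have "h (t / 2) / (t / 2) \<le> h s / s / 4"
    using st unfolding lacunary_def by blast
  also have "\<dots> \<le> h r / r / 4"
    using rs by (intro divide_right_mono snowflaking_slope_antimono[OF sf]) (auto simp: lacunary_def)
  finally show ?thesis
    using rs st unfolding lacunary_def by auto
qed

lemma lacunary_mono:
  assumes lac: "lacunary h s t" and "0 < s'" "s' \<le> s" "t \<le> t'"
  shows "lacunary h s' t'"
proof -
  have "h (t' / 2) / (t' / 2) \<le> h (t / 2) / (t / 2)"
    using lac assms by (intro snowflaking_slope_antimono[OF sf]) (auto simp: lacunary_def)
  also have "\<dots> \<le> h s / s / 4"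
    using lac unfolding lacunary_def by blast
  also have "\<dots> \<le> h s' / s' / 4"
    using assms by (intro divide_right_mono snowflaking_slope_antimono[OF sf]) auto
  finally show ?thesis
    using lac assms unfolding lacunary_def by auto
qed

text \<open>Concavity bounds h u from below by the chord value u/t * h t \<ge> h t - s * h t / t, and
  lacunarity keeps s * h t / t below h s / 4.\<close>
lemma lacunary_triangle:
  assumes lac: "lacunary h s t" and tri: "t \<le> u + s" and u: "0 \<le> u"
  shows "h t - h s / 4 \<le> h u"
proof (cases "t \<le> u")
  case True
  then have "h t \<le> h u"
    using lac by (intro snowflaking_mono[OF sf]) (auto simp: lacunary_def)
  moreover have "0 \<le> h s"
    using lac by (intro snowflaking_nonneg[OF sf]) (auto simp: lacunary_def)
  ultimately show ?thesis
    by linarith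
next
  case False
  have s: "0 < s" "2 * s \<le> t"
    using lac by (auto simp: lacunary_def)
  have "h t - h s / 4 = h t - s * (h s / s / 4)"
    using s by simp
  also have "\<dots> \<le> h t - s * (h t / t)"
  proof -
    have "h t / t \<le> h (t / 2) / (t / 2)"
      using s by (intro snowflaking_slope_antimono[OF sf]) auto
    then have "h t / t \<le> h s / s / 4"
      using lac unfolding lacunary_def by linarith
    then show ?thesis
      using mult_left_mono[of "h t / t" "h s / s / 4" s] s by linarith
  qed
  also have "\<dots> \<le> u / t * h t"
  proof -
    have "0 \<le> h t"
      using s by (intro snowflaking_nonneg[OF sf]) auto
    then have "(t - s) / t * h t \<le> u / t * h t"
      using tri s by (intro mult_right_mono divide_right_mono) auto
    then show ?thesis
      using s by (simp add: field_simps)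
  qed
  also have "\<dots> \<le> h u"
    using False tri s by (intro snowflaking_chord[OF sf]) auto
  finally show ?thesis .
qed

end

text \<open>Here a, c, w are (1+\<delta>)-distorted images of the sides h t, h s, e of a triangle whose two
  sides at the apex point in nearly the same direction.\<close>
lemma distorted_triangle_bound:
  fixes \<delta> ht hs e a c w :: real
  assumes \<delta>: "0 < \<delta>" "\<delta> \<le> 1/10" and hs: "0 < hs" "hs \<le> ht" and e: "ht - hs / 4 \<le> e"
    and a: "ht / (1 + \<delta>) \<le> a" "a \<le> (1 + \<delta>) * ht"
    and c: "hs / (1 + \<delta>) \<le> c" "c \<le> (1 + \<delta>) * hs"
    and w: "e / (1 + \<delta>) \<le> w" "w \<le> \<bar>a - c\<bar> + c / 4"
  shows "hs \<le> 5 * \<delta> * ht"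
proof -
  define L where "L = 1 + \<delta>"
  have L: "1 < L" "L \<le> 11/10" "L * L - 1 = \<delta> * (2 + \<delta>)"
    using \<delta> unfolding L_def by (auto simp: algebra_simps)
  have lower: "ht \<le> L * a" "hs \<le> L * c" "e \<le> L * w"
    using a(1) c(1) w(1) L by (auto simp: L_def field_simps)
  have upper: "L * a \<le> L * (L * ht)" "L * c \<le> L * (L * hs)"
    using a(2) c(2) L by (auto simp: L_def)
  show ?thesis
  proof (cases "c \<le> a")
    case True
    then have "L * w \<le> L * (a - 3 * c / 4)"
      using w(2) L by (intro mult_left_mono) auto
    then have "hs / 2 \<le> (L * L - 1) * ht"
      using lower upper e by (simp add: algebra_simps)
    also have "\<dots> \<le> \<delta> * (5 / 2) * ht"
      using L \<delta> hs by (intro mult_right_mono) auto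
    finally show ?thesis
      by simp
  next
    case False
    then have "L * w \<le> L * (5 * c / 4 - a)"
      using w(2) L by (intro mult_left_mono) auto
    then have "ht - hs / 4 \<le> 5 / 4 * (L * (L * hs)) - ht"
      using lower upper e by (simp add: algebra_simps)
    moreover have "L * (L * hs) \<le> 121 / 100 * hs"
      using L hs mult_mono[of L "11/10" L "11/10"] by (simp add: mult.assoc[symmetric] mult_right_mono)
    ultimately show ?thesis
      using \<delta> hs by linarith
  qed
qed

lemma bi_lipschitz_onD:
  "bi_lipschitz_on X \<rho> \<sigma> L f \<Longrightarrow> x \<in> X \<Longrightarrow> y \<in> X \<Longrightarrow> \<rho> x y / L \<le> \<sigma> (f x) (f y) \<and> \<sigma> (f x) (f y) \<le> L * \<rho> x y"
  unfolding bi_lipschitz_on_def by blast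

lemma lacunary_close_directions_bound:
  fixes f :: "'a \<Rightarrow> 'v::real_vector"
  assumes ms: "Metric_space X d" and sf: "snowflaking h" and N: "is_norm N"
    and bl: "bi_lipschitz_on X (\<lambda>x y. h (d x y)) (\<lambda>u v. N (u - v)) (1 + \<delta>) f"
    and \<delta>: "0 < \<delta>" "\<delta> \<le> 1/10"
    and X: "p \<in> X" "q \<in> X" "b \<in> X"
    and lac: "lacunary h (d q b) (d p b)"
    and close: "N (direction N (f p - f b) - direction N (f q - f b)) \<le> 1/4"
  shows "h (d q b) \<le> 5 * \<delta> * h (d p b)"
proof -
  have pos: "0 < d q b" "d q b \<le> d p b"
    using lac by (auto simp: lacunary_def)
  have hq: "0 < h (d q b)" "h (d q b) \<le> h (d p b)"
    using pos by (auto intro: snowflaking_pos[OF sf] snowflaking_mono[OF sf])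
  have "h (d p b) - h (d q b) / 4 \<le> h (d p q)"
    using lac Metric_space.triangle[OF ms X] Metric_space.nonneg[OF ms]
    by (rule lacunary_triangle[OF sf])
  moreover note fp = bi_lipschitz_onD[OF bl X(1,3)] and fq = bi_lipschitz_onD[OF bl X(2,3)]
    and fpq = bi_lipschitz_onD[OF bl X(1,2)]
  moreover have "N (f p - f q) \<le> \<bar>N (f p - f b) - N (f q - f b)\<bar> + N (f q - f b) / 4"
  proof -
    have "0 < h (d q b) / (1 + \<delta>)" "0 < h (d p b) / (1 + \<delta>)"
      using hq \<delta> by auto
    then have "0 < N (f p - f b)" "0 < N (f q - f b)"
      using fp fq by linarith+
    from is_norm_diff_le_if_directions_close[OF N this close]
    show ?thesis
      by simp
  qed
  ultimately show ?thesis
    using distorted_triangle_bound[OF \<delta> hq] by blast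
qed

definition lacunary_star :: "'a set \<Rightarrow> ('a \<Rightarrow> 'a \<Rightarrow> real) \<Rightarrow> (real \<Rightarrow> real) \<Rightarrow> nat \<Rightarrow> bool" where
  "lacunary_star X d h K \<longleftrightarrow> (\<exists>b\<in>X. \<exists>x. (\<forall>i<K. x i \<in> X) \<and>
     (\<forall>i<K. \<forall>j<K. i \<noteq> j \<longrightarrow> lacunary h (d (x i) b) (d (x j) b) \<or> lacunary h (d (x j) b) (d (x i) b)))"

lemma is_norm_close_unit_vectors:
  fixes N :: "'v::euclidean_space \<Rightarrow> real" and u :: "nat \<Rightarrow> 'v"
  assumes N: "is_norm N" and unit: "\<And>i. i < K \<Longrightarrow> N (u i) = 1" and K: "9 ^ DIM('v) < K"
  shows "\<exists>i<K. \<exists>j<K. i \<noteq> j \<and> N (u i - u j) < 1/4"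
proof (rule ccontr)
  assume "\<not> ?thesis"
  then have far: "1/4 \<le> N (u i - u j)" if "i < K" "j < K" "i \<noteq> j" for i j
    using that by (meson not_less)
  have "real (card {..<K}) \<le> (2 * 1 / (1/4) + 1) ^ DIM('v)"
    using unit far by (intro card_le_if_norm_separated[OF N, where c = 0 and p = u]) auto
  then have "K \<le> 9 ^ DIM('v)"
    by (simp only: card_lessThan of_nat_le_iff[symmetric]) simp
  then show False
    using K by simp
qed

lemma ratio_lower_bound_finite:
  fixes g :: "'i \<Rightarrow> real"
  assumes I: "finite I" and pos: "\<And>i. i \<in> I \<Longrightarrow> 0 < g i"
  obtains r where "0 < r" "\<And>i j. i \<in> I \<Longrightarrow> j \<in> I \<Longrightarrow> r * g j \<le> g i"
proof (cases "I = {}")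
  case True
  then show thesis
    by (intro that[of 1]) auto
next
  case False
  define m where "m = Min (g ` I)"
  define M where "M = Max (g ` I)"
  have m: "0 < m" "\<And>i. i \<in> I \<Longrightarrow> m \<le> g i"
    using I False pos Min_in[of "g ` I"] unfolding m_def by auto
  have M: "\<And>j. j \<in> I \<Longrightarrow> g j \<le> M"
    using I unfolding M_def by auto
  then have "0 < M"
    using False m by (meson ex_in_conv order_less_le_trans)
  show thesis
  proof (rule that[of "m / M"])
    show "0 < m / M"
      using m(1) \<open>0 < M\<close> by simp
    show "m / M * g j \<le> g i" if "i \<in> I" "j \<in> I" for i j
    proof -
      have "m / M * g j \<le> m / M * M"
        using M[OF that(2)] m(1) \<open>0 < M\<close> by (intro mult_left_mono) auto
      also have "\<dots> \<le> g i"
        using m(2)[OF that(1)] \<open>0 < M\<close> by simp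
      finally show ?thesis .
    qed
  qed
qed

text \<open>Two of the 9^n + 1 points leave f b in 1/4-close directions, and the rigidity bound for
  that pair fails once \<delta> is small compared with all ratios h (D i) / h (D j).\<close>
lemma lacunary_star_not_bi_lipschitz:
  assumes ms: "Metric_space X d" and sf: "snowflaking h"
    and star: "lacunary_star X d h (9 ^ DIM('v::euclidean_space) + 1)"
  shows "\<exists>\<delta>>0. \<forall>(N :: 'v \<Rightarrow> real) (f :: 'a \<Rightarrow> 'v).
           is_norm N \<longrightarrow> \<not> bi_lipschitz_on X (\<lambda>x y. h (d x y)) (\<lambda>u v. N (u - v)) (1 + \<delta>) f"
proof -
  define K :: nat where "K = 9 ^ DIM('v) + 1"
  obtain b x where b: "b \<in> X" and x: "\<And>i. i < K \<Longrightarrow> x i \<in> X"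
    and lac: "\<And>i j. i < K \<Longrightarrow> j < K \<Longrightarrow> i \<noteq> j \<Longrightarrow>
                lacunary h (d (x i) b) (d (x j) b) \<or> lacunary h (d (x j) b) (d (x i) b)"
    using star unfolding lacunary_star_def K_def by metis
  define D where "D i = d (x i) b" for i
  have hD: "0 < h (D i)" if "i < K" for i
  proof -
    define j :: nat where "j = (if i = 0 then 1 else 0)"
    have "j < K" "i \<noteq> j"
      using that unfolding j_def K_def by auto
    then have "lacunary h (D i) (D j) \<or> lacunary h (D j) (D i)"
      using lac[OF that] unfolding D_def by blast
    then show ?thesis
      unfolding lacunary_def by (auto intro: snowflaking_pos[OF sf])
  qed
  obtain r where r: "0 < r" and r_le: "\<And>i j. i < K \<Longrightarrow> j < K \<Longrightarrow> r * h (D j) \<le> h (D i)"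
    using ratio_lower_bound_finite[of "{..<K}" "\<lambda>i. h (D i)"] hD by auto
  define \<delta> where "\<delta> = min (1/10) (r/10)"
  have \<delta>: "0 < \<delta>" "\<delta> \<le> 1/10" "\<delta> \<le> r/10"
    using r unfolding \<delta>_def by auto
  have "\<not> bi_lipschitz_on X (\<lambda>x y. h (d x y)) (\<lambda>u v. N (u - v)) (1 + \<delta>) f"
    if N: "is_norm N" for N :: "'v \<Rightarrow> real" and f :: "'a \<Rightarrow> 'v"
  proof
    assume bl: "bi_lipschitz_on X (\<lambda>x y. h (d x y)) (\<lambda>u v. N (u - v)) (1 + \<delta>) f"
    define u where "u i = direction N (f (x i) - f b)" for i
    have "0 < N (f (x i) - f b)" if "i < K" for i
      using bi_lipschitz_onD[OF bl x[OF that] b] hD[OF that] \<delta> unfolding D_def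
      by (smt (verit) divide_pos_pos)
    then obtain i j where ij: "i < K" "j < K" "i \<noteq> j" "N (u i - u j) < 1/4"
      using is_norm_close_unit_vectors[OF N, of K u] is_norm_direction[OF N]
      unfolding u_def K_def by auto
    have contradiction: False
      if ij: "i < K" "j < K" and lac_ji: "lacunary h (D j) (D i)" and close: "N (u i - u j) \<le> 1/4" for i j
    proof -
      have "h (D j) \<le> 5 * \<delta> * h (D i)"
        using lac_ji close unfolding D_def u_def
        by (rule lacunary_close_directions_bound[OF ms sf N bl \<delta>(1,2) x[OF ij(1)] x[OF ij(2)] b])
      also have "\<dots> \<le> r / 2 * h (D i)"
        using \<delta> hD[OF ij(1)] by (intro mult_right_mono) auto
      finally have "r * h (D i) \<le> r / 2 * h (D i)"
        using r_le[OF ij(2,1)] by linarith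
      then show False
        using r hD[OF ij(1)] by simp
    qed
    from lac[OF ij(1-3)] show False
    proof
      assume "lacunary h (d (x i) b) (d (x j) b)"
      moreover have "N (u j - u i) \<le> 1/4"
        using ij(4) is_norm_minus_commute[OF N, of "u i" "u j"] by simp
      ultimately show False
        using contradiction[OF ij(2,1)] unfolding D_def by blast
    next
      assume "lacunary h (d (x j) b) (d (x i) b)"
      then show False
        using contradiction[OF ij(1,2)] ij(4) unfolding D_def by simp
    qed
  qed
  then show ?thesis
    using \<delta>(1) by blast
qed

section \<open>Separated sets\<close>

definition large_separated_sets :: "'a set \<Rightarrow> ('a \<Rightarrow> 'a \<Rightarrow> real) \<Rightarrow> real \<Rightarrow> real \<Rightarrow> bool" where
  "large_separated_sets X \<rho> \<epsilon> R \<longleftrightarrow>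
     (\<forall>K. \<exists>S\<subseteq>X. finite S \<and> card S = K \<and> (\<forall>x\<in>S. \<forall>y\<in>S. x \<noteq> y \<longrightarrow> \<epsilon> \<le> \<rho> x y \<and> \<rho> x y \<le> R))"

lemma large_separated_setsD:
  assumes "large_separated_sets X \<rho> \<epsilon> R"
  obtains S where "S \<subseteq> X" "finite S" "card S = K"
    "\<And>x y. x \<in> S \<Longrightarrow> y \<in> S \<Longrightarrow> x \<noteq> y \<Longrightarrow> \<epsilon> \<le> \<rho> x y \<and> \<rho> x y \<le> R"
  using assms unfolding large_separated_sets_def by meson

lemma large_separated_sets_snowflake:
  assumes sf: "snowflaking h" and sep: "large_separated_sets X d \<epsilon> R" and \<epsilon>: "0 \<le> \<epsilon>"
  shows "large_separated_sets X (\<lambda>x y. h (d x y)) (h \<epsilon>) (h R)"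
  unfolding large_separated_sets_def
proof
  fix K
  obtain S where S: "S \<subseteq> X" "finite S" "card S = K"
    and dist: "\<And>x y. x \<in> S \<Longrightarrow> y \<in> S \<Longrightarrow> x \<noteq> y \<Longrightarrow> \<epsilon> \<le> d x y \<and> d x y \<le> R"
    by (rule large_separated_setsD[OF sep, where K = K]) blast
  have "h \<epsilon> \<le> h (d x y) \<and> h (d x y) \<le> h R" if "x \<in> S" "y \<in> S" "x \<noteq> y" for x y
    using dist[OF that] \<epsilon> by (intro conjI snowflaking_mono[OF sf]) auto
  with S show "\<exists>S\<subseteq>X. finite S \<and> card S = K \<and>
      (\<forall>x\<in>S. \<forall>y\<in>S. x \<noteq> y \<longrightarrow> h \<epsilon> \<le> h (d x y) \<and> h (d x y) \<le> h R)"
    by (intro exI[of _ S]) simp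
qed

text \<open>A bi-Lipschitz image of an \<epsilon>-separated set of diameter at most R is separated at scale
  \<epsilon>/L and lies in a ball of radius L R, so its size is bounded by volume packing.\<close>
lemma large_separated_sets_not_bi_lipschitz:
  fixes N :: "'v::euclidean_space \<Rightarrow> real" and f :: "'a \<Rightarrow> 'v"
  assumes N: "is_norm N" and L: "0 < L" and \<epsilon>: "0 < \<epsilon>" and sep: "large_separated_sets X \<rho> \<epsilon> R"
  shows "\<not> bi_lipschitz_on X \<rho> (\<lambda>u v. N (u - v)) L f"
proof
  assume bl: "bi_lipschitz_on X \<rho> (\<lambda>u v. N (u - v)) L f"
  have R: "\<epsilon> \<le> R"
  proof -
    obtain S where "S \<subseteq> X" "finite S" "card S = 2"
      and dist: "\<And>x y. x \<in> S \<Longrightarrow> y \<in> S \<Longrightarrow> x \<noteq> y \<Longrightarrow> \<epsilon> \<le> \<rho> x y \<and> \<rho> x y \<le> R"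
      by (rule large_separated_setsD[OF sep, where K = 2]) blast
    then obtain x y where "S = {x, y}" "x \<noteq> y"
      by (meson card_2_iff)
    then show ?thesis
      using dist[of x y] by auto
  qed
  define bound where "bound = (2 * (L * R) / (\<epsilon> / L) + 1) ^ DIM('v)"
  obtain S where SX: "S \<subseteq> X" and S: "finite S" "card S = nat \<lceil>bound\<rceil> + 1"
    and dist: "\<And>x y. x \<in> S \<Longrightarrow> y \<in> S \<Longrightarrow> x \<noteq> y \<Longrightarrow> \<epsilon> \<le> \<rho> x y \<and> \<rho> x y \<le> R"
    by (rule large_separated_setsD[OF sep, where K = "nat \<lceil>bound\<rceil> + 1"]) blast
  have "S \<noteq> {}"
    using S(2) by auto
  then obtain x0 where x0: "x0 \<in> S"
    by blast
  have fdist: "\<epsilon> / L \<le> N (f x - f y) \<and> N (f x - f y) \<le> L * R" if xy: "x \<in> S" "y \<in> S" "x \<noteq> y" for x y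
  proof -
    have "\<epsilon> \<le> \<rho> x y" "\<rho> x y \<le> R"
      using dist[OF xy] by simp_all
    then have "\<epsilon> / L \<le> \<rho> x y / L" "L * \<rho> x y \<le> L * R"
      using L by (simp_all add: divide_right_mono)
    moreover have "\<rho> x y / L \<le> N (f x - f y) \<and> N (f x - f y) \<le> L * \<rho> x y"
      using bi_lipschitz_onD[OF bl] SX xy by blast
    ultimately show ?thesis
      by linarith
  qed
  have "real (card S) \<le> bound"
    unfolding bound_def
  proof (rule card_le_if_norm_separated[OF N S(1), where c = "f x0" and p = f])
    show "N (f x - f x0) \<le> L * R" if "x \<in> S" for x
    proof (cases "x = x0")
      case True
      then show ?thesis
        using is_normD(2)[OF N, of 0] L R \<epsilon> by simp
    next
      case False
      then show ?thesis
        using fdist[OF that x0] by blast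
    qed
    show "\<epsilon> / L \<le> N (f x - f y)" if "x \<in> S" "y \<in> S" "x \<noteq> y" for x y
      using fdist[OF that] by blast
  qed (use L R \<epsilon> in simp_all)
  then show False
    using S(2) real_nat_ceiling_ge[of bound] by linarith
qed

section \<open>Finding the configurations in an infinite metric space\<close>

lemma transitive_chain:
  assumes "a \<in> A" and step: "\<And>x. x \<in> A \<Longrightarrow> \<exists>y\<in>A. R x y"
    and trans: "\<And>x y z. x \<in> A \<Longrightarrow> y \<in> A \<Longrightarrow> z \<in> A \<Longrightarrow> R x y \<Longrightarrow> R y z \<Longrightarrow> R x z"
  shows "\<exists>f :: nat \<Rightarrow> 'a. (\<forall>n. f n \<in> A) \<and> (\<forall>m n. m < n \<longrightarrow> R (f m) (f n))"
proof -
  have "\<exists>f. \<forall>n. f n \<in> A \<and> R (f n) (f (Suc n))"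
  proof (rule dependent_nat_choice[of "\<lambda>_ x. x \<in> A" "\<lambda>_. R"])
    show "\<exists>x. x \<in> A"
      using assms(1) by blast
    show "\<exists>y. y \<in> A \<and> R x y" if "x \<in> A" for x and n :: nat
      using step[OF that] by blast
  qed
  then obtain f where f: "\<And>n. f n \<in> A" "\<And>n. R (f n) (f (Suc n))"
    by blast
  have chain: "R (f m) (f n)" if "m < n" for m n
    using that
  proof (induction n)
    case (Suc n)
    show ?case
    proof (cases "m = n")
      case False
      then have "R (f m) (f n)"
        using Suc by simp
      then show ?thesis
        using trans[OF f(1) f(1) f(1) _ f(2)] by blast
    qed (use f(2) in simp)
  qed simp
  show ?thesis
    using f(1) chain by blast
qed

lemma lacunary_starI:
  assumes "b \<in> X" "\<And>i. i < K \<Longrightarrow> x i \<in> X"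
    and "\<And>i j. i < j \<Longrightarrow> j < K \<Longrightarrow>
           lacunary h (d (x i) b) (d (x j) b) \<or> lacunary h (d (x j) b) (d (x i) b)"
  shows "lacunary_star X d h K"
  unfolding lacunary_star_def
proof (intro bexI[OF _ assms(1)] exI[of _ x] conjI allI impI)
  fix i j assume "i < K" "j < K" "i \<noteq> j"
  then show "lacunary h (d (x i) b) (d (x j) b) \<or> lacunary h (d (x j) b) (d (x i) b)"
    using assms(3)[of i j] assms(3)[of j i] by (cases "i < j") auto
qed (use assms(2) in blast)

context Metric_space
begin

lemma unbounded_imp_lacunary_star:
  assumes sf: "snowflaking h" and b: "b \<in> M" and unbounded: "\<And>r. \<exists>x\<in>M. r < d x b"
  shows "lacunary_star M d h K"
proof -
  define A where "A = {x \<in> M. 0 < d x b}"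
  obtain x0 where x0: "x0 \<in> A"
    using unbounded[of 0] unfolding A_def by blast
  have step: "\<exists>y\<in>A. lacunary h (d x b) (d y b)" if x: "x \<in> A" for x
  proof -
    define s where "s = d x b"
    have s: "0 < s" "0 < h s / s"
      using x snowflaking_pos[OF sf] unfolding A_def s_def by auto
    obtain T where T: "\<And>t. T \<le> t \<Longrightarrow> h t / t \<le> h s / s / 4"
      using snowflaking_slope_small_at_top[OF sf, of "h s / s / 4"] s by auto
    obtain y where y: "y \<in> M" "max (2 * s) (2 * T) < d y b"
      using unbounded by blast
    then have "lacunary h s (d y b)"
      using s T[of "d y b / 2"] unfolding lacunary_def by auto
    moreover have "y \<in> A"
      using y s unfolding A_def by auto
    ultimately show ?thesis
      unfolding s_def by blast
  qed
  have "\<exists>x :: nat \<Rightarrow> 'a. (\<forall>n. x n \<in> A) \<and> (\<forall>i j. i < j \<longrightarrow> lacunary h (d (x i) b) (d (x j) b))"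
    using x0 step
  proof (rule transitive_chain[where R = "\<lambda>x y. lacunary h (d x b) (d y b)"])
    show "lacunary h (d x b) (d z b)" if "lacunary h (d x b) (d y b)" "lacunary h (d y b) (d z b)" for x y z
      using lacunary_trans[OF sf that] .
  qed
  then obtain x :: "nat \<Rightarrow> 'a" where x: "\<And>n. x n \<in> A"
    and lac: "\<And>i j. i < j \<Longrightarrow> lacunary h (d (x i) b) (d (x j) b)"
    by blast
  show ?thesis
    by (rule lacunary_starI[where b = b and x = x]) (use x lac b in \<open>auto simp: A_def\<close>)
qed

lemma not_totally_bounded_imp_large_separated_sets:
  assumes e: "\<epsilon> > 0" and not_covered: "\<And>F. finite F \<Longrightarrow> F \<subseteq> M \<Longrightarrow> \<not> M \<subseteq> (\<Union>x\<in>F. mball x \<epsilon>)"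
    and b: "b \<in> M" and R: "\<And>x. x \<in> M \<Longrightarrow> d x b \<le> R"
  shows "large_separated_sets M d \<epsilon> (2 * R)"
  unfolding large_separated_sets_def
proof
  fix K
  have "\<exists>S\<subseteq>M. finite S \<and> card S = K \<and> (\<forall>x\<in>S. \<forall>y\<in>S. x \<noteq> y \<longrightarrow> \<epsilon> \<le> d x y)"
  proof (induction K)
    case 0
    show ?case
      by (intro exI[of _ "{}"]) auto
  next
    case (Suc K)
    then obtain S where S: "S \<subseteq> M" "finite S" "card S = K"
      and sep: "\<forall>x\<in>S. \<forall>y\<in>S. x \<noteq> y \<longrightarrow> \<epsilon> \<le> d x y"
      by blast
    obtain z where z: "z \<in> M" "z \<notin> (\<Union>x\<in>S. mball x \<epsilon>)"
      using not_covered[OF S(2,1)] by blast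
    have far: "\<epsilon> \<le> d x z" if "x \<in> S" for x
      using z that S(1) by force
    then have "z \<notin> S"
      using e z(1) by force
    moreover have "\<forall>x\<in>insert z S. \<forall>y\<in>insert z S. x \<noteq> y \<longrightarrow> \<epsilon> \<le> d x y"
      using sep far commute by auto
    ultimately show ?case
      using S z(1) by (intro exI[of _ "insert z S"]) auto
  qed
  then obtain S where S: "S \<subseteq> M" "finite S" "card S = K"
    and sep: "\<forall>x\<in>S. \<forall>y\<in>S. x \<noteq> y \<longrightarrow> \<epsilon> \<le> d x y"
    by blast
  have "d x y \<le> 2 * R" if "x \<in> S" "y \<in> S" for x y
  proof -
    have "x \<in> M" "y \<in> M"
      using S(1) that by auto
    then show ?thesis
      using triangle[of x b y] R[of x] R[of y] commute[of b y] b by linarith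
  qed
  then show "\<exists>S\<subseteq>M. finite S \<and> card S = K \<and> (\<forall>x\<in>S. \<forall>y\<in>S. x \<noteq> y \<longrightarrow> \<epsilon> \<le> d x y \<and> d x y \<le> 2 * R)"
    using S sep by (intro exI[of _ S]) auto
qed

lemma MCauchy_dist_convergent:
  assumes C: "MCauchy y" and a: "a \<in> M"
  shows "convergent (\<lambda>k. d a (y k))"
proof -
  have yM: "y n \<in> M" for n
    using C unfolding MCauchy_def by auto
  have "Cauchy (\<lambda>k. d a (y k))"
  proof (rule metric_CauchyI)
    fix e :: real assume "0 < e"
    then obtain N where N: "\<forall>n n'. N \<le> n \<longrightarrow> N \<le> n' \<longrightarrow> d (y n) (y n') < e"
      using C unfolding MCauchy_def by blast
    have "dist (d a (y k)) (d a (y l)) < e" if "N \<le> k" "N \<le> l" for k l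
    proof -
      have "\<bar>d a (y k) - d a (y l)\<bar> \<le> d (y k) (y l)"
        using mdist_reverse_triangle[OF yM a yM, of k l] commute[of "y k" a] by simp
      moreover have "d (y k) (y l) < e"
        using N that by blast
      ultimately show ?thesis
        unfolding dist_real_def by linarith
    qed
    then show "\<exists>N. \<forall>k\<ge>N. \<forall>l\<ge>N. dist (d a (y k)) (d a (y l)) < e"
      by blast
  qed
  then show ?thesis
    by (simp add: Cauchy_convergent_iff)
qed

text \<open>The limits r p play the role of the distances from the points of the sequence to its limit
  in the completion of M.\<close>
lemma MCauchy_inj_dist_limits:
  assumes inj: "inj y" and C: "MCauchy y"
  obtains r where "\<And>p. (\<lambda>k. d (y p) (y k)) \<longlonglongrightarrow> r p" "\<And>e. 0 < e \<Longrightarrow> \<exists>p. 0 < r p \<and> r p \<le> e"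
proof -
  have yM: "y n \<in> M" for n
    using C unfolding MCauchy_def by auto
  define r where "r p = lim (\<lambda>k. d (y p) (y k))" for p
  have lim: "(\<lambda>k. d (y p) (y k)) \<longlonglongrightarrow> r p" for p
    using MCauchy_dist_convergent[OF C yM] unfolding r_def convergent_LIMSEQ_iff .
  have r_nonneg: "0 \<le> r p" for p
    by (rule LIMSEQ_le_const[OF lim]) auto
  have r_small: "\<exists>N. \<forall>p\<ge>N. r p \<le> e" if e: "0 < e" for e
  proof -
    obtain N where N: "\<forall>n n'. N \<le> n \<longrightarrow> N \<le> n' \<longrightarrow> d (y n) (y n') < e"
      using C e unfolding MCauchy_def by blast
    have "r p \<le> e" if "N \<le> p" for p
      by (rule LIMSEQ_le_const2[OF lim]) (use N that in \<open>auto intro!: exI[of _ N] less_imp_le\<close>)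
    then show ?thesis
      by blast
  qed
  have r_zero_unique: "p = q" if "r p = 0" "r q = 0" for p q
  proof -
    have "d (y p) (y q) \<le> r p + r q"
    proof (rule LIMSEQ_le_const[OF tendsto_add[OF lim lim]])
      have "d (y p) (y q) \<le> d (y p) (y k) + d (y q) (y k)" for k
        using triangle[OF yM yM yM, of p q k] commute[of "y k" "y q"] by simp
      then show "\<exists>N. \<forall>k\<ge>N. d (y p) (y q) \<le> d (y p) (y k) + d (y q) (y k)"
        by blast
    qed
    then have "y p = y q"
      using that yM nonneg[of "y p" "y q"] by simp
    then show ?thesis
      using inj by (simp add: inj_eq)
  qed
  have "\<exists>p. 0 < r p \<and> r p \<le> e" if e: "0 < e" for e
  proof -
    obtain N where N: "\<And>p. N \<le> p \<Longrightarrow> r p \<le> e"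
      using r_small[OF e] by blast
    have "r N \<noteq> 0 \<or> r (Suc N) \<noteq> 0"
      using r_zero_unique[of N "Suc N"] by auto
    then show ?thesis
      using N[of N] N[of "Suc N"] r_nonneg[of N] r_nonneg[of "Suc N"] by force
  qed
  with lim show thesis
    using that by blast
qed

text \<open>Distances to a late point y k of the sequence approximate the limits r p, so a rapidly
  decreasing choice of the r p gives lacunary distances to y k.\<close>
lemma MCauchy_imp_lacunary_star:
  assumes sf: "snowflaking h" and inj: "inj y" and C: "MCauchy y"
  shows "lacunary_star M d h K"
proof -
  obtain r where lim: "\<And>p. (\<lambda>k. d (y p) (y k)) \<longlonglongrightarrow> r p"
    and small: "\<And>e. 0 < e \<Longrightarrow> \<exists>p. 0 < r p \<and> r p \<le> e"
    using MCauchy_inj_dist_limits[OF inj C] by blast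
  have yM: "y n \<in> M" for n
    using C unfolding MCauchy_def by auto
  define A where "A = {p. 0 < r p}"
  obtain p0 where p0: "p0 \<in> A"
    using small[of 1] unfolding A_def by auto
  have step: "\<exists>q\<in>A. lacunary h (2 * r q) (r p / 2)" if p: "p \<in> A" for p
  proof -
    have rp: "0 < r p"
      using p unfolding A_def by simp
    obtain \<tau> where \<tau>: "0 < \<tau>" "\<And>t. 0 < t \<Longrightarrow> t \<le> \<tau> \<Longrightarrow> 4 * (h (r p / 4) / (r p / 4)) \<le> h t / t"
      by (rule snowflaking_slope_large_near_0[OF sf, where K = "4 * (h (r p / 4) / (r p / 4))"]) blast
    obtain q where q: "0 < r q" "r q \<le> min (r p / 8) (\<tau> / 2)"
      using small[of "min (r p / 8) (\<tau> / 2)"] rp \<tau>(1) by auto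
    have "4 * (h (r p / 4) / (r p / 4)) \<le> h (2 * r q) / (2 * r q)"
      using \<tau>(2)[of "2 * r q"] q by auto
    moreover have "r p / 2 / 2 = r p / 4"
      by simp
    ultimately have "lacunary h (2 * r q) (r p / 2)"
      using q unfolding lacunary_def by auto
    then show ?thesis
      using q(1) unfolding A_def by blast
  qed
  have "\<exists>m :: nat \<Rightarrow> nat. (\<forall>n. m n \<in> A) \<and>
      (\<forall>i j. i < j \<longrightarrow> lacunary h (2 * r (m j)) (r (m i) / 2))"
    using p0 step
  proof (rule transitive_chain[where R = "\<lambda>p q. lacunary h (2 * r q) (r p / 2)"])
    fix p q w
    assume pq: "lacunary h (2 * r q) (r p / 2)" and qw: "lacunary h (2 * r w) (r q / 2)"
    have "0 < r q"
      using pq unfolding lacunary_def by simp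
    then have "lacunary h (r q / 2) (r p / 2)"
      by (intro lacunary_mono[OF sf pq]) auto
    then show "lacunary h (2 * r w) (r p / 2)"
      by (rule lacunary_trans[OF sf qw])
  qed
  then obtain m :: "nat \<Rightarrow> nat" where m: "\<And>n. 0 < r (m n)"
    and lac: "\<And>i j. i < j \<Longrightarrow> lacunary h (2 * r (m j)) (r (m i) / 2)"
    unfolding A_def by blast
  have "\<forall>\<^sub>F k in sequentially. \<forall>i\<in>{..<K}. dist (d (y (m i)) (y k)) (r (m i)) < r (m i) / 2"
    using lim m by (intro eventually_ball_finite ballI tendstoD) auto
  then obtain k where k: "\<And>i. i < K \<Longrightarrow> dist (d (y (m i)) (y k)) (r (m i)) < r (m i) / 2"
    unfolding eventually_sequentially by blast
  define D where "D i = d (y (m i)) (y k)" for i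
  have D: "r (m i) / 2 < D i" "D i < 2 * r (m i)" if "i < K" for i
    using k[OF that] m[of i] unfolding D_def dist_real_def abs_less_iff by auto
  show ?thesis
  proof (rule lacunary_starI[where b = "y k" and x = "\<lambda>i. y (m i)"])
    fix i j assume ij: "i < j" "j < K"
    have "lacunary h (D j) (D i)"
      using D[of i] D[of j] m[of j] ij by (intro lacunary_mono[OF sf lac[OF ij(1)]]) auto
    then show "lacunary h (d (y (m i)) (y k)) (d (y (m j)) (y k)) \<or>
        lacunary h (d (y (m j)) (y k)) (d (y (m i)) (y k))"
      unfolding D_def by blast
  qed (use yM in auto)
qed

lemma infinite_imp_large_separated_sets_or_lacunary_stars:
  assumes sf: "snowflaking h" and inf: "infinite M"
  shows "(\<exists>\<epsilon>>0. \<exists>R. large_separated_sets M d \<epsilon> R) \<or> (\<forall>K. lacunary_star M d h K)"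
proof -
  obtain b where b: "b \<in> M"
    using inf by (metis ex_in_conv finite.emptyI)
  show ?thesis
  proof (cases "\<forall>r. \<exists>x\<in>M. r < d x b")
    case True
    then show ?thesis
      using unbounded_imp_lacunary_star[OF sf b] by blast
  next
    case False
    then obtain R where R: "\<And>x. x \<in> M \<Longrightarrow> d x b \<le> R"
      by (auto simp: not_less)
    show ?thesis
    proof (cases "mtotally_bounded M")
      case True
      obtain \<sigma> :: "nat \<Rightarrow> 'a" where \<sigma>: "inj \<sigma>" "range \<sigma> \<subseteq> M"
        using infinite_countable_subset[OF inf] by blast
      then obtain s where s: "strict_mono s" "MCauchy (\<sigma> \<circ> s)"
        using True unfolding mtotally_bounded_sequentially by blast
      have "inj (\<sigma> \<circ> s)"
        using \<sigma>(1) strict_mono_imp_inj_on[OF s(1)] by (simp add: inj_compose)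
      then show ?thesis
        using MCauchy_imp_lacunary_star[OF sf _ s(2)] by blast
    next
      case False
      then have "\<exists>\<epsilon>>0. \<forall>F. finite F \<longrightarrow> F \<subseteq> M \<longrightarrow> \<not> M \<subseteq> (\<Union>x\<in>F. mball x \<epsilon>)"
        unfolding mtotally_bounded_def by meson
      then obtain \<epsilon> where "\<epsilon> > 0" "\<And>F. finite F \<Longrightarrow> F \<subseteq> M \<Longrightarrow> \<not> M \<subseteq> (\<Union>x\<in>F. mball x \<epsilon>)"
        by blast
      then show ?thesis
        using not_totally_bounded_imp_large_separated_sets[OF _ _ b R] by blast
    qed
  qed
qed

end

theorem corollary2p1:
  fixes X :: "'a set" and d :: "'a \<Rightarrow> 'a \<Rightarrow> real" and h :: "real \<Rightarrow> real"
  assumes "Metric_space X d" and "infinite X" and "snowflaking h"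
  shows "\<exists>\<delta>>0. \<forall>(N :: real ^ 'n \<Rightarrow> real) (f :: 'a \<Rightarrow> real ^ 'n).
           is_norm N \<longrightarrow>
           \<not> bi_lipschitz_on X (\<lambda>x y. h (d x y)) (\<lambda>u v. N (u - v)) (1 + \<delta>) f"
  using Metric_space.infinite_imp_large_separated_sets_or_lacunary_stars[OF assms(1,3,2)]
proof
  assume "\<exists>\<epsilon>>0. \<exists>R. large_separated_sets X d \<epsilon> R"
  then obtain \<epsilon> R where \<epsilon>: "0 < \<epsilon>" and "large_separated_sets X d \<epsilon> R"
    by blast
  then have sep: "large_separated_sets X (\<lambda>x y. h (d x y)) (h \<epsilon>) (h R)"
    by (intro large_separated_sets_snowflake[OF assms(3)]) simp_all
  have "\<not> bi_lipschitz_on X (\<lambda>x y. h (d x y)) (\<lambda>u v. N (u - v)) (1 + 1/10) f"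
    if "is_norm N" for N :: "real ^ 'n \<Rightarrow> real" and f :: "'a \<Rightarrow> real ^ 'n"
    by (rule large_separated_sets_not_bi_lipschitz[OF that _ snowflaking_pos[OF assms(3) \<epsilon>] sep]) simp
  then show ?thesis
    by (intro exI[of _ "1/10"]) auto
next
  assume "\<forall>K. lacunary_star X d h K"
  then show ?thesis
    using lacunary_star_not_bi_lipschitz[OF assms(1,3), where 'v = "real ^ 'n"] by simp
qed

end
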